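(* Let $x\in\Gamma$ be such that $g$ is $C^1$ near $x$, let $x^*\in\mathbb R^n$, let $\lambda\in\Lambda(x,x^* )$ and let $u\in K_\Gamma(x,x^* )$. Then $\langle\mathcal H(x,\lambda)u,u\rangle\ge0$.
   Context: Setting. Let $n,m\ge1$ and let $\mathcal Q:=\{(q_0,q_r)\in\mathbb R\times\mathbb R^m:\|q_r\|\le q_0\}$ be the second-order cone. For $q=(q_0,q_r)\in\mathbb R^{1+m}$ write $\hat q:=(-q_0,q_r)$, and let $\mathcal Q^*:=\{\hat q: q\in\mathcal Q\}=\{(q_0,q_r):\|q_r\|\le-q_0\}$. The normal cone to $\mathcal Q$ at $q\in\mathcal Q$ is $N_{\mathcal Q}(q)=\mathcal Q^*$ if $q=0$, $N_{\mathcal Q}(q)=\{0\}$ if $q\in\operatorname{int}\mathcal Q$, and $N_{\mathcal Q}(q)=\{\alpha\hat q:\alpha\ge0\}$ if $q\in\operatorname{bd}\mathcal Q\setminus\{0\}$. $\Gamma:=\{x\in\mathbb R^n: g(x)\in\mathcal Q\}$ with $g=(g_0,g_r):\mathbb R^n\to\mathbb R\times\mathbb R^m$; $\nabla g(x)$ is the Jacobian and $\nabla g(x)^*$ its transpose. $T_\Gamma(x)$ is the Bouligand tangent cone $\{v:\exists t_k\downarrow0,\ v_k\to v,\ x+t_kv_k\in\Gamma\}$. For $x\in\Gamma$, $x^*\in\mathbb R^n$: $\Lambda(x,x^* ):=\{\lambda\in N_{\mathcal Q}(g(x)):\nabla g(x)^*\lambda=x^*\}$; the critical cone is $K_\Gamma(x,x^*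 ):=\{u\in T_\Gamma(x):\langle x^*,u\rangle=0\}$. The curvature mapping is $\mathcal H(x,\lambda):=\frac{-\lambda_0}{g_0(x)}\big(\nabla g_r(x)^*\nabla g_r(x)-\nabla g_0(x)^*\nabla g_0(x)\big)$ if $g(x)\in\operatorname{bd}\mathcal Q\setminus\{0\}$ and $\mathcal H(x,\lambda):=0$ otherwise. *)

theory Defs
  imports "HOL-Analysis.Analysis"
begin

definition soc :: "(real \<times> (real^'m)) set" where
  "soc = {q. norm (snd q) \<le> fst q}"

definition hat :: "real \<times> (real^'m) \<Rightarrow> real \<times> (real^'m)" where
  "hat q = (- fst q, snd q)"

definition soc_dual :: "(real \<times> (real^'m)) set" where
  "soc_dual = hat ` soc"

text \<open>Normal cone to Q at q (q assumed in Q).\<close>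
definition soc_normal :: "real \<times> (real^'m) \<Rightarrow> (real \<times> (real^'m)) set" where
  "soc_normal q =
     (if q = 0 then soc_dual
      else if q \<in> interior soc then {0}
      else {\<alpha> *\<^sub>R hat q | \<alpha>. \<alpha> \<ge> 0})"

definition Gamma :: "(real^'n \<Rightarrow> real \<times> (real^'m)) \<Rightarrow> (real^'n) set" where
  "Gamma g = {x. g x \<in> soc}"

definition tangent_cone :: "(real^'n) set \<Rightarrow> real^'n \<Rightarrow> (real^'n) set" where
  "tangent_cone S x = {v. \<exists>t w. (\<forall>k. t k > 0) \<and> t \<longlonglongrightarrow> 0 \<and> w \<longlonglongrightarrow> v
                           \<and> (\<forall>k. x + t k *\<^sub>R w k \<in> S)}"

definition C1_near :: "(real^'n \<Rightarrow> real \<times> (real^'m)) \<Rightarrow> real^'n \<Rightarrow> bool" where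
  "C1_near g x = (\<exists>e>0. \<exists>D :: real^'n \<Rightarrow> ((real^'n) \<Rightarrow>\<^sub>L (real \<times> (real^'m))).
       (\<forall>y\<in>ball x e. (g has_derivative blinfun_apply (D y)) (at y)) \<and> continuous_on (ball x e) D)"

definition Lambda :: "(real^'n \<Rightarrow> real \<times> (real^'m)) \<Rightarrow> real^'n \<Rightarrow> real^'n \<Rightarrow> (real \<times> (real^'m)) set" where
  "Lambda g x xs = {l \<in> soc_normal (g x).
       adjoint (frechet_derivative g (at x)) l = xs}"

definition crit_cone :: "(real^'n \<Rightarrow> real \<times> (real^'m)) \<Rightarrow> real^'n \<Rightarrow> real^'n \<Rightarrow> (real^'n) set" where
  "crit_cone g x xs = {u \<in> tangent_cone (Gamma g) x. inner xs u = 0}"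

definition curv :: "(real^'n \<Rightarrow> real \<times> (real^'m)) \<Rightarrow> real^'n \<Rightarrow> real \<times> (real^'m) \<Rightarrow> real^'n \<Rightarrow> real^'n" where
  "curv g x l =
     (if g x \<in> frontier soc - {0} then
        (\<lambda>u. (- fst l / fst (g x)) *\<^sub>R
           (adjoint (\<lambda>v. snd (frechet_derivative g (at x) v)) (snd (frechet_derivative g (at x) u))
          - adjoint (\<lambda>v. fst (frechet_derivative g (at x) v)) (fst (frechet_derivative g (at x) u))))
      else (\<lambda>u. 0))"

end

theory Submission
  imports Defs
begin

text \<open>On the boundary of the cone the multiplier is \<open>\<alpha> \<cdot> hat (g x)\<close>, so \<open>\<langle>H u,u\<rangle> = \<alpha>(\<bar>q\<bar>\<^sup>2 - p\<^sup>2)\<close>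
  with \<open>(p,q) = \<nabla>g(x)u\<close>. Criticality \<open>\<langle>x\<^sup>*,u\<rangle> = \<langle>\<lambda>,\<nabla>g(x)u\<rangle> = 0\<close> reads \<open>\<langle>g\<^sub>r(x),q\<rangle> = g\<^sub>0(x) p\<close>, and
  since \<open>\<bar>g\<^sub>r(x)\<bar> = g\<^sub>0(x) > 0\<close>, Cauchy-Schwarz gives \<open>\<bar>p\<bar> \<le> \<bar>q\<bar>\<close>.\<close>

lemma closed_soc: "closed (soc :: (real \<times> (real^'m)) set)"
  unfolding soc_def by (rule closed_Collect_le) (intro continuous_intros)+

lemma interior_soc_superset: "{q. norm (snd q) < fst q} \<subseteq> interior (soc :: (real \<times> (real^'m)) set)"
proof (rule interior_maximal)
  show "open {q :: real \<times> (real^'m). norm (snd q) < fst q}"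
    by (rule open_Collect_less) (intro continuous_intros)+
qed (auto simp: soc_def)

lemma frontier_soc_nonzero:
  fixes q :: "real \<times> (real^'m)"
  assumes "q \<in> frontier soc - {0}"
  shows "norm (snd q) = fst q" and "fst q > 0"
proof -
  have "q \<in> soc" "q \<notin> interior soc"
    using assms frontier_subset_closed[OF closed_soc] by (auto simp: frontier_def)
  then show eq: "norm (snd q) = fst q"
    using interior_soc_superset by (force simp: soc_def)
  show "fst q > 0"
  proof (rule ccontr)
    assume "\<not> fst q > 0"
    with eq norm_ge_zero[of "snd q"] have "q = 0" by (simp add: prod_eq_iff)
    with assms show False by simp
  qed
qed

lemma soc_normal_frontier:
  "q \<in> frontier soc - {0} \<Longrightarrow> soc_normal q = {\<alpha> *\<^sub>R hat q | \<alpha>. \<alpha> \<ge> 0}"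
  by (auto simp: soc_normal_def frontier_def)

lemma C1_near_linear_derivative:
  assumes "C1_near g x"
  shows "linear (frechet_derivative g (at x))"
proof -
  obtain e D where "e > 0" "\<forall>y\<in>ball x e. (g has_derivative blinfun_apply (D y)) (at y)"
    using assms unfolding C1_near_def by blast
  then have "(g has_derivative blinfun_apply (D x)) (at x)" by auto
  then show ?thesis
    using frechet_derivative_at has_derivative_linear by metis
qed

lemma sq_le_inner_self_if_inner_eq:
  fixes b q :: "'a :: real_inner"
  assumes "norm b = a" "a > 0" "b \<bullet> q = a * p"
  shows "p\<^sup>2 \<le> q \<bullet> q"
proof -
  have "a * \<bar>p\<bar> \<le> a * norm q"
    using Cauchy_Schwarz_ineq2[of b q] assms by (simp add: abs_mult)
  then have "\<bar>p\<bar> \<le> norm q" using assms(2) by simp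
  then have "\<bar>p\<bar>\<^sup>2 \<le> (norm q)\<^sup>2" by (rule power_mono) simp
  then show ?thesis by (simp add: power2_norm_eq_inner)
qed

lemma inner_curv_frontier:
  fixes g :: "real^'n \<Rightarrow> real \<times> (real^'m)" and x :: "real^'n"
  defines "L \<equiv> frechet_derivative g (at x)"
  assumes "linear L" "g x \<in> frontier soc - {0}"
  shows "inner (curv g x l u) u
           = (- fst l / fst (g x)) * (snd (L u) \<bullet> snd (L u) - (fst (L u))\<^sup>2)"
proof -
  have lin_fst: "linear (\<lambda>v. fst (L v))" and lin_snd: "linear (\<lambda>v. snd (L v))"
    using linear_compose[OF assms(2) linear_fst] linear_compose[OF assms(2) linear_snd]
    by (simp_all add: o_def)
  have "inner (curv g x l u) u
          = (- fst l / fst (g x)) * (u \<bullet> adjoint (\<lambda>v. snd (L v)) (snd (L u))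
                                     - u \<bullet> adjoint (\<lambda>v. fst (L v)) (fst (L u)))"
    using assms(3) by (simp add: curv_def L_def inner_commute[of _ u] inner_diff_right)
  then show ?thesis
    by (simp add: adjoint_works[OF lin_fst] adjoint_works[OF lin_snd] power2_eq_square)
qed

theorem lemma4p1:
  fixes g :: "real^'n \<Rightarrow> real \<times> (real^'m)"
    and x xs u :: "real^'n" and l :: "real \<times> (real^'m)"
  assumes "x \<in> Gamma g"
    and "C1_near g x"
    and "l \<in> Lambda g x xs"
    and "u \<in> crit_cone g x xs"
  shows "inner (curv g x l u) u \<ge> 0"
proof (cases "g x \<in> frontier soc - {0}")
  case False
  then show ?thesis unfolding curv_def if_not_P[OF False] by simp
next
  case bd: True
  define L where "L = frechet_derivative g (at x)"
  have lin: "linear L" unfolding L_def using assms(2) by (rule C1_near_linear_derivative)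
  obtain \<alpha> where "\<alpha> \<ge> 0" and l: "l = \<alpha> *\<^sub>R hat (g x)"
    using assms(3) soc_normal_frontier[OF bd] by (auto simp: Lambda_def)
  have "xs = adjoint L l" using assms(3) by (simp add: Lambda_def L_def)
  then have "L u \<bullet> l = u \<bullet> xs" by (simp add: adjoint_works[OF lin])
  also have "\<dots> = 0" using assms(4) by (simp add: crit_cone_def inner_commute)
  finally have crit: "\<alpha> * (snd (g x) \<bullet> snd (L u) - fst (g x) * fst (L u)) = 0"
    by (simp add: l hat_def inner_prod_def inner_commute algebra_simps)
  have "- fst l / fst (g x) = \<alpha>"
    using frontier_soc_nonzero(2)[OF bd] by (simp add: l hat_def)
  with inner_curv_frontier[of g x, OF _ bd] lin
  have form: "inner (curv g x l u) u = \<alpha> * (snd (L u) \<bullet> snd (L u) - (fst (L u))\<^sup>2)"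
    unfolding L_def by metis
  show ?thesis
  proof (cases "\<alpha> = 0")
    case False
    with crit have "snd (g x) \<bullet> snd (L u) = fst (g x) * fst (L u)" by simp
    with frontier_soc_nonzero[OF bd] have "(fst (L u))\<^sup>2 \<le> snd (L u) \<bullet> snd (L u)"
      by (intro sq_le_inner_self_if_inner_eq) auto
    with form \<open>\<alpha> \<ge> 0\<close> show ?thesis by simp
  qed (simp add: form)
qed

end
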